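(* Let $G=G_{\mathbf E}$ be a multi-GGS group which is not the constant GGS group. Then $$N_{\mathrm{lab}(\Sigma)}(A)\le C(A)\qquad\text{and}\qquad N_{\mathrm{lab}(\Sigma)}(B)\le C(B),$$ where $C(\cdot)$ denotes the centraliser in $\mathrm{Aut}(X^* )$.
   Context: Let $p$ be an odd prime and $X=\{0,1,\dots,p-1\}$, identified with $\mathbb F_p$. $X^*$ is the $p$-regular rooted tree of finite words over $X$; $\mathrm{Aut}(X^* )$ acts on the right. Sections $g|_v$ are defined by $(vw)^g=v^g\,w^{g|_v}$, and the label $g|^v\in\mathrm{Sym}(X)$ is the permutation by which $g|_v$ acts on one-letter words. $\mathrm{Stab}(1)$ is the stabiliser of all one-letter words and $\psi_1\colon\mathrm{Stab}(1)\to\mathrm{Aut}(X^* )^p$, $g\mapsto(g|_0,\dots,g|_{p-1})$, is an isomorphism. $\sigma=(0\,1\,\cdots\,p-1)$, $\Sigma=\langle\sigma\rangle$; $a$ is the rooted automorphism acting as $\sigma$ on the first letter and trivially on the rest, $A=\langle a\rangle$. $\mathrm{lab}(\Sigma)=\{g\in\mathrm{Aut}(X^* )\mid g|^v\in\Sigma\text{ for all } v\in X^*\}$. Let $\mathbf E\le\mathbb F_p^{p-1}$ be a subspace of dimension $r\ge1$; $E$ is the $r\times(p-1)$ matrix whose rows form a fixed basis of $\mathbf E$, with columns $\mathbf e_1,\dots,\mathbf e_{p-1}$. For $\mathbf n\in\mathbb F_p^r$, $b^{\mathbf n}\in\mathrm{Stab}(1)$ is the unique automorphism with $\psi_1(b^{\mathbf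 n})=(b^{\mathbf n},a^{\mathbf n\cdot\mathbf e_1},\dots,a^{\mathbf n\cdot\mathbf e_{p-1}})$; $B=\{b^{\mathbf n}\}$. $G_{\mathbf E}$ is generated by $a$ and $B$; it is the constant GGS group if $\mathbf E=\{(\lambda,\dots,\lambda)\mid\lambda\in\mathbb F_p\}$. *)

theory Defs
  imports "HOL-Computational_Algebra.Primes"
begin

text \<open>Letters are 0..p-1 (identified with F_p); words are lists of letters.
 Automorphisms of the tree X^* act on the right; we represent g by the function
 w \<mapsto> w^g on words (extended by the identity outside words). Thus the product
 g h (first g, then h) is the function composition h \<circ> g.\<close>

definition words :: "nat \<Rightarrow> nat list set" where
  "words p = {w. set w \<subseteq> {..<p}}"

definition is_aut :: "nat \<Rightarrow> (nat list \<Rightarrow> nat list) \<Rightarrow> bool" where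
  "is_aut p g \<longleftrightarrow> bij_betw g (words p) (words p)
     \<and> (\<forall>w. w \<notin> words p \<longrightarrow> g w = w)
     \<and> (\<forall>v w. v @ w \<in> words p \<longrightarrow>
          length (g (v @ w)) = length (v @ w) \<and> take (length v) (g (v @ w)) = g v)"

definition Aut :: "nat \<Rightarrow> (nat list \<Rightarrow> nat list) set" where
  "Aut p = {g. is_aut p g}"

text \<open>lab(Sigma): every label g|^v (the permutation x \<mapsto> last letter of (v x)^g)
 is a power of sigma = (0 1 ... p-1).\<close>
definition labSigma :: "nat \<Rightarrow> (nat list \<Rightarrow> nat list) set" where
  "labSigma p = {g \<in> Aut p. \<forall>v \<in> words p. \<exists>k. \<forall>x<p. g (v @ [x]) ! length v = (x + k) mod p}"

fun rot :: "nat \<Rightarrow> nat \<Rightarrow> nat list \<Rightarrow> nat list" where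
  "rot p k [] = []"
| "rot p k (x # w) = ((x + k) mod p) # w"

definition aaut :: "nat \<Rightarrow> nat list \<Rightarrow> nat list" where
  "aaut p = (\<lambda>w. if w \<in> words p then rot p 1 w else w)"

definition Agrp :: "nat \<Rightarrow> (nat list \<Rightarrow> nat list) set" where
  "Agrp p = {aaut p ^^ k | k. True}"

definition vecs :: "nat \<Rightarrow> (nat \<Rightarrow> nat) set" where
  "vecs p = {u. \<forall>i. (i \<in> {1..<p} \<longrightarrow> u i < p) \<and> (i \<notin> {1..<p} \<longrightarrow> u i = 0)}"

definition subspace_Fp :: "nat \<Rightarrow> (nat \<Rightarrow> nat) set \<Rightarrow> bool" where
  "subspace_Fp p E \<longleftrightarrow> E \<subseteq> vecs p \<and> (\<lambda>_. 0) \<in> E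
     \<and> (\<forall>u\<in>E. \<forall>v\<in>E. (\<lambda>i. (u i + v i) mod p) \<in> E)
     \<and> (\<forall>c<p. \<forall>u\<in>E. (\<lambda>i. (c * u i) mod p) \<in> E)"

text \<open>The subspace giving the constant GGS group.\<close>
definition constE :: "nat \<Rightarrow> (nat \<Rightarrow> nat) set" where
  "constE p = {u \<in> vecs p. \<exists>c<p. \<forall>i\<in>{1..<p}. u i = c}"

text \<open>b_u with psi_1(b_u) = (b_u, a^{u_1}, ..., a^{u_{p-1}}). For a basis matrix E,
 b^n = b_u with u = n E (so u_i = n . e_i), and B = {b_u | u \<in> E}.\<close>
fun bfun :: "nat \<Rightarrow> (nat \<Rightarrow> nat) \<Rightarrow> nat list \<Rightarrow> nat list" where
  "bfun p u [] = []"
| "bfun p u (x # w) = (if x = 0 then 0 # bfun p u w else x # rot p (u x) w)"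

definition baut :: "nat \<Rightarrow> (nat \<Rightarrow> nat) \<Rightarrow> nat list \<Rightarrow> nat list" where
  "baut p u = (\<lambda>w. if w \<in> words p then bfun p u w else w)"

definition Bgrp :: "nat \<Rightarrow> (nat \<Rightarrow> nat) set \<Rightarrow> (nat list \<Rightarrow> nat list) set" where
  "Bgrp p E = baut p ` E"

definition centr :: "nat \<Rightarrow> (nat list \<Rightarrow> nat list) set \<Rightarrow> (nat list \<Rightarrow> nat list) set" where
  "centr p S = {g \<in> Aut p. \<forall>h\<in>S. g \<circ> h = h \<circ> g}"

definition normlab :: "nat \<Rightarrow> (nat list \<Rightarrow> nat list) set \<Rightarrow> (nat list \<Rightarrow> nat list) set" where
  "normlab p S = {g \<in> labSigma p. (\<lambda>h. g \<circ> h) ` S = (\<lambda>h. h \<circ> g) ` S}"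

end

theory Submission
  imports Defs "HOL-Number_Theory.Cong"
begin

text \<open>An element g of lab(Sigma) acts at each vertex v by a rotation x \<mapsto> x + K v.
 If g normalises A, then g a = a^k g, and evaluating on one-letter words forces k = 1 mod p.
 If g normalises B, then g b_u = b_w g, and evaluating on the words [x, 0] gives
 u x = w (x + K []): conjugation by g shifts E cyclically by r = K []. All vectors of E vanish
 at the index 0, and a nonzero r generates Z/p, so a nonzero shift-closed E forces r = 0;
 then w = u, i.e. g commutes with b_u.\<close>

lemma in_words_iff: "xs \<in> words p \<longleftrightarrow> (\<forall>x\<in>set xs. x < p)"
  unfolding words_def by auto

lemma labSigma_subset_Aut: "labSigma p \<subseteq> Aut p"
  unfolding labSigma_def by auto

lemma normlab_conj:
  assumes "g \<in> normlab p S" and "h \<in> S"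
  obtains h' where "h' \<in> S" and "g \<circ> h = h' \<circ> g"
proof -
  have "g \<circ> h \<in> (\<lambda>h. h \<circ> g) ` S"
    using assms unfolding normlab_def by blast
  then show ?thesis using that by blast
qed

lemma funpow_comp_commute: "g \<circ> f = f \<circ> g \<Longrightarrow> g \<circ> f ^^ n = f ^^ n \<circ> g"
proof (induction n)
  case (Suc n)
  then show ?case by (metis comp_assoc funpow_Suc_right)
qed simp

definition rot_labels :: "nat \<Rightarrow> (nat list \<Rightarrow> nat) \<Rightarrow> (nat list \<Rightarrow> nat list) \<Rightarrow> bool" where
  "rot_labels p K g \<longleftrightarrow> g [] = []
     \<and> (\<forall>v\<in>words p. \<forall>x<p. g (v @ [x]) = g v @ [(x + K v) mod p])"

lemma labSigma_rot_labels:
  assumes "g \<in> labSigma p"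
  obtains K where "rot_labels p K g"
proof -
  have aut: "is_aut p g"
    and "\<forall>v\<in>words p. \<exists>k. \<forall>x<p. g (v @ [x]) ! length v = (x + k) mod p"
    using assms unfolding labSigma_def Aut_def by auto
  then obtain K where K: "\<And>v x. v \<in> words p \<Longrightarrow> x < p \<Longrightarrow> g (v @ [x]) ! length v = (x + K v) mod p"
    by metis
  have "g v @ [(x + K v) mod p] = g (v @ [x])" if "v \<in> words p" "x < p" for v x
  proof -
    have vx: "v @ [x] \<in> words p" using that by (simp add: in_words_iff)
    have "length (g (v @ [x])) = Suc (length v)" and "take (length v) (g (v @ [x])) = g v"
      using aut vx unfolding is_aut_def by auto
    then show ?thesis
      using K[OF that] take_Suc_conv_app_nth[of "length v" "g (v @ [x])"] by simp
  qed
  moreover have "g [] = []"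
    using aut unfolding is_aut_def by (metis append_Nil in_words_iff empty_iff length_0_conv list.set(1))
  ultimately have "rot_labels p K g"
    unfolding rot_labels_def by simp
  then show ?thesis by (rule that)
qed

lemma rot_labels_one_letter:
  "rot_labels p K g \<Longrightarrow> x < p \<Longrightarrow> g [x] = [(x + K []) mod p]"
  unfolding rot_labels_def by (metis append_Nil empty_iff in_words_iff list.set(1))

lemma rot_labels_two_letters:
  assumes "rot_labels p K g" and "x < p" and "y < p"
  shows "g [x, y] = [(x + K []) mod p, (y + K [x]) mod p]"
proof -
  have "[x] \<in> words p" using assms(2) by (simp add: in_words_iff)
  then have "g ([x] @ [y]) = g [x] @ [(y + K [x]) mod p]"
    using assms(1,3) unfolding rot_labels_def by blast
  then show ?thesis using rot_labels_one_letter[OF assms(1,2)] by simp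
qed

lemma rot_cong: "[k = l] (mod p) \<Longrightarrow> rot p k w = rot p l w"
  by (cases w) (simp_all add: cong_def, metis mod_add_right_eq)

lemma rot_in_words: "p > 0 \<Longrightarrow> w \<in> words p \<Longrightarrow> rot p k w \<in> words p"
  by (cases w) (simp_all add: in_words_iff)

lemma aaut_funpow: "p > 0 \<Longrightarrow> (aaut p ^^ k) w = (if w \<in> words p then rot p k w else w)"
proof (induction k)
  case 0
  then show ?case by (cases w) (simp_all add: in_words_iff)
next
  case (Suc k)
  have "rot p 1 (rot p k w) = rot p (Suc k) w"
    by (cases w) (simp_all add: mod_Suc_eq)
  with Suc show ?case by (simp add: aaut_def rot_in_words)
qed

lemma aaut_funpow_cong: "p > 0 \<Longrightarrow> [k = l] (mod p) \<Longrightarrow> aaut p ^^ k = aaut p ^^ l"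
  by (rule ext) (simp add: aaut_funpow rot_cong)

lemma normlab_Agrp_subset_centr:
  assumes "p > 0"
  shows "normlab p (Agrp p) \<subseteq> centr p (Agrp p)"
proof
  fix g assume g: "g \<in> normlab p (Agrp p)"
  then have gL: "g \<in> labSigma p" unfolding normlab_def by simp
  obtain K where K: "rot_labels p K g" using labSigma_rot_labels[OF gL] .
  have "aaut p \<in> Agrp p" unfolding Agrp_def by (intro CollectI exI[of _ "1::nat"]) simp
  then obtain k where k: "g \<circ> aaut p = aaut p ^^ k \<circ> g"
    using normlab_conj[OF g] unfolding Agrp_def by blast
  have a0: "aaut p [0] = [1 mod p]"
    using assms by (simp add: aaut_def in_words_iff)
  have g0: "g [0] = [K [] mod p]" and g1: "g [1 mod p] = [(1 mod p + K []) mod p]"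
    using assms by (simp_all add: rot_labels_one_letter[OF K])
  have ak: "(aaut p ^^ k) [K [] mod p] = [(K [] mod p + k) mod p]"
    using assms by (simp add: aaut_funpow in_words_iff)
  have "g (aaut p [0]) = (aaut p ^^ k) (g [0])"
    using k by (metis comp_apply)
  then have "[(1 mod p + K []) mod p] = [(K [] mod p + k) mod p]"
    by (simp only: a0 g0 g1 ak)
  then have "[K [] + 1 = K [] + k] (mod p)"
    unfolding cong_def list.inject mod_add_left_eq by (simp only: add.commute)
  then have "[1 = k] (mod p)"
    by (simp only: cong_add_lcancel_nat)
  then have "aaut p ^^ k = aaut p ^^ 1"
    by (rule aaut_funpow_cong[OF assms cong_sym])
  with k have "g \<circ> aaut p = aaut p \<circ> g" by simp
  then have "g \<circ> aaut p ^^ n = aaut p ^^ n \<circ> g" for n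
    by (rule funpow_comp_commute)
  then have "\<forall>h\<in>Agrp p. g \<circ> h = h \<circ> g"
    unfolding Agrp_def by blast
  moreover have "g \<in> Aut p" using gL labSigma_subset_Aut by blast
  ultimately show "g \<in> centr p (Agrp p)"
    unfolding centr_def by simp
qed

lemma vecs_lt: "u \<in> vecs p \<Longrightarrow> p > 0 \<Longrightarrow> u x < p"
  unfolding vecs_def by (cases "x \<in> {1..<p}") auto

lemma vecs_eqI:
  assumes "u \<in> vecs p" and "w \<in> vecs p" and "\<And>x. x < p \<Longrightarrow> u x = w x"
  shows "u = w"
proof
  fix x show "u x = w x"
    using assms unfolding vecs_def by (cases "x < p") auto
qed

lemma baut_two_letters:
  assumes "u \<in> vecs p" and "x < p" and "y < p"
  shows "baut p u [x, y] = [x, (y + u x) mod p]"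
proof -
  have "u 0 = 0" using assms(1) unfolding vecs_def by simp
  moreover have "[x, y] \<in> words p" using assms(2,3) by (simp add: in_words_iff)
  ultimately show ?thesis using assms(3) by (cases "x = 0") (simp_all add: baut_def)
qed

lemma conj_baut_shift:
  assumes "rot_labels p K g" and u: "u \<in> vecs p" and w: "w \<in> vecs p"
    and conj: "g \<circ> baut p u = baut p w \<circ> g" and x: "x < p"
  shows "u x = w ((x + K []) mod p)"
proof -
  have p: "p > 0" using x by simp
  let ?c = "(x + K []) mod p" and ?d = "K [x] mod p"
  have bu: "baut p u [x, 0] = [x, u x]"
    using baut_two_letters[OF u x p] vecs_lt[OF u p] by simp
  have gu: "g [x, u x] = [?c, (u x + K [x]) mod p]"
    by (rule rot_labels_two_letters[OF assms(1) x vecs_lt[OF u p]])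
  have g0: "g [x, 0] = [?c, ?d]"
    using rot_labels_two_letters[OF assms(1) x p] by simp
  have bw: "baut p w [?c, ?d] = [?c, (?d + w ?c) mod p]"
    using p by (intro baut_two_letters[OF w]) simp_all
  have "g (baut p u [x, 0]) = baut p w (g [x, 0])"
    using conj by (metis comp_apply)
  then have "[?c, (u x + K [x]) mod p] = [?c, (?d + w ?c) mod p]"
    by (simp only: bu gu g0 bw)
  then have "[u x + K [x] = w ?c + K [x]] (mod p)"
    unfolding cong_def list.inject mod_add_left_eq by (simp only: add.commute)
  then have "[u x = w ?c] (mod p)"
    by (simp only: cong_add_rcancel_nat)
  then show ?thesis
    using vecs_lt[OF u p] vecs_lt[OF w p] by (simp add: cong_def)
qed

lemma shift_closed_vecs_trivial:
  assumes "prime p" and "E \<subseteq> vecs p" and "\<not> p dvd r"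
    and shift: "\<And>u. u \<in> E \<Longrightarrow> \<exists>w\<in>E. \<forall>x<p. u x = w ((x + r) mod p)"
    and "u \<in> E"
  shows "u = (\<lambda>_. 0)"
proof -
  have p: "p > 0" using assms(1) prime_gt_0_nat by blast
  have zero: "\<forall>u\<in>E. \<forall>x<p. [x + k * r = 0] (mod p) \<longrightarrow> u x = 0" for k
  proof (induction k)
    case 0
    show ?case using assms(2) unfolding vecs_def by (auto simp: cong_def)
  next
    case (Suc k)
    show ?case
    proof (intro ballI allI impI)
      fix u x assume "u \<in> E" "x < p" and x: "[x + Suc k * r = 0] (mod p)"
      then obtain w where "w \<in> E" and "u x = w ((x + r) mod p)" using shift by blast
      moreover have "[(x + r) mod p + k * r = x + Suc k * r] (mod p)"
        unfolding cong_def by (metis mod_add_left_eq add.assoc mult_Suc)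
      then have "[(x + r) mod p + k * r = 0] (mod p)"
        using x by (rule cong_trans)
      ultimately show "u x = 0" using Suc.IH p by (metis mod_less_divisor)
    qed
  qed
  have "coprime r p"
    using assms(1,3) by (simp add: prime_imp_coprime coprime_commute)
  then obtain s where s: "[r * s = 1] (mod p)"
    using cong_solve_coprime_nat by (metis One_nat_def)
  have "u x = 0" for x
  proof (cases "x < p")
    case True
    have "[(r * s) * (p - x) = 1 * (p - x)] (mod p)"
      using s by (rule cong_scalar_right)
    then have "[x + (s * (p - x)) * r = x + (p - x)] (mod p)"
      by (intro cong_add cong_refl) (simp add: ac_simps)
    then have "[x + (s * (p - x)) * r = 0] (mod p)"
      using True by (simp add: cong_def)
    then show ?thesis using zero assms(5) True by blast
  next
    case False
    then show ?thesis using assms(2,5) unfolding vecs_def by auto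
  qed
  then show ?thesis by (simp add: fun_eq_iff)
qed

lemma normlab_Bgrp_subset_centr:
  assumes p: "prime p" and E: "E \<subseteq> vecs p" and nonzero: "\<exists>u\<in>E. u \<noteq> (\<lambda>_. 0)"
  shows "normlab p (Bgrp p E) \<subseteq> centr p (Bgrp p E)"
proof
  fix g assume g: "g \<in> normlab p (Bgrp p E)"
  then have gL: "g \<in> labSigma p" unfolding normlab_def by simp
  obtain K where K: "rot_labels p K g" using labSigma_rot_labels[OF gL] .
  have conj: "\<exists>w\<in>E. g \<circ> baut p u = baut p w \<circ> g \<and> (\<forall>x<p. u x = w ((x + K []) mod p))"
    if u: "u \<in> E" for u
  proof -
    obtain h where "h \<in> Bgrp p E" "g \<circ> baut p u = h \<circ> g"
      using normlab_conj[OF g] u unfolding Bgrp_def by blast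
    then obtain w where w: "w \<in> E" "g \<circ> baut p u = baut p w \<circ> g" unfolding Bgrp_def by blast
    have "\<forall>x<p. u x = w ((x + K []) mod p)"
      using u w(1) E by (intro allI impI conj_baut_shift[OF K _ _ w(2)]) auto
    with w show ?thesis by blast
  qed
  have "p dvd K []"
  proof (rule ccontr)
    assume ndvd: "\<not> p dvd K []"
    have shift: "\<And>u. u \<in> E \<Longrightarrow> \<exists>w\<in>E. \<forall>x<p. u x = w ((x + K []) mod p)"
      using conj by blast
    show False
      using nonzero shift_closed_vecs_trivial[OF p E ndvd shift] by blast
  qed
  then have shift0: "(x + K []) mod p = x" if "x < p" for x
    using that by (simp add: mod_add_right_eq[symmetric])
  have comm: "g \<circ> baut p u = baut p u \<circ> g" if u: "u \<in> E" for u
  proof -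
    obtain w where w: "w \<in> E" "g \<circ> baut p u = baut p w \<circ> g"
      and shift: "\<forall>x<p. u x = w ((x + K []) mod p)"
      using conj[OF u] by blast
    have "u = w"
    proof (rule vecs_eqI)
      show "u \<in> vecs p" "w \<in> vecs p" using u w(1) E by blast+
      fix x assume x: "x < p"
      then have "u x = w ((x + K []) mod p)" using shift by blast
      also have "\<dots> = w x" using shift0[OF x] by simp
      finally show "u x = w x" .
    qed
    then show ?thesis using w(2) by simp
  qed
  have "g \<in> Aut p" using gL labSigma_subset_Aut by blast
  then show "g \<in> centr p (Bgrp p E)"
    unfolding centr_def Bgrp_def using comm by simp
qed

theorem mainTheorem7:
  fixes p :: nat and E :: "(nat \<Rightarrow> nat) set"
  assumes "prime p" and "odd p"
    and "subspace_Fp p E" and "\<exists>u\<in>E. u \<noteq> (\<lambda>_. 0)"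
    and "E \<noteq> constE p"
  shows "normlab p (Agrp p) \<subseteq> centr p (Agrp p) \<and> normlab p (Bgrp p E) \<subseteq> centr p (Bgrp p E)"
proof
  show "normlab p (Agrp p) \<subseteq> centr p (Agrp p)"
    using normlab_Agrp_subset_centr assms(1) prime_gt_0_nat by blast
  have "E \<subseteq> vecs p" using assms(3) unfolding subspace_Fp_def by simp
  then show "normlab p (Bgrp p E) \<subseteq> centr p (Bgrp p E)"
    using normlab_Bgrp_subset_centr assms(1,4) by blast
qed

end
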